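(* Let $P$ be a full-dimensional convex polytope in a real vector space $X$ of dimension $d\geq 1$, and consider the conditions: (i) There is a bilinear form $B$ on $X^*$ such that $B(f_1^\perp,f_2^\perp)>0$ for all facets $f_1,f_2\in F(P)$ (not necessarily distinct) that share a vertex. (ii) There is an assignment of a vector $x_f\in X$ to each $f\in F(P)$ such that $\langle f_1^\perp, x_{f_2}\rangle>0$ whenever $f_1,f_2$ (not necessarily distinct) share a vertex. (iii) There is an assignment of a point $u_f\in S^{d-1}$ to each $f\in F(P)$ such that for every open hemisphere $H\subseteq S^{d-1}$ there is a vertex $v\in V(P)$ with $u_f\in H$ for every facet $f$ containing $v$. (iv) $\chi(\mathrm{KG}(P))\geq d+1$. Then (i) $\Rightarrow$ (ii) $\Rightarrow$ (iii) $\Rightarrow$ (iv).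
   Context: $X^*$ is the dual space of $X$ and $\langle\cdot,\cdot\rangle$ the natural pairing. $V(P)$ and $F(P)$ denote the vertices and facets of $P$; for $f\in F(P)$, $f^\perp\in X^*$ denotes an outward normal of $f$. The Kneser graph $\mathrm{KG}(P)$ of the polytope $P$ has vertex set $V(P)$, two vertices being adjacent iff no facet of $P$ contains both. *)

theory Defs
  imports "HOL-Analysis.Analysis"
begin

text \<open>The ambient space X is an abstract Euclidean space 'a (dimension DIM('a) \<ge> 1).
  The dual space X^* is identified with X via the inner product, so the natural
  pairing is the inner product.\<close>

definition vertices_of :: "'a::euclidean_space set \<Rightarrow> 'a set" where
  "vertices_of P = {v. v extreme_point_of P}"

definition outward_normal :: "'a::euclidean_space set \<Rightarrow> 'a set \<Rightarrow> 'a \<Rightarrow> bool" where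
  "outward_normal P f n \<longleftrightarrow> n \<noteq> 0 \<and>
     (\<exists>b. P \<subseteq> {x. inner n x \<le> b} \<and> f = P \<inter> {x. inner n x = b})"

definition share_vertex :: "'a::euclidean_space set \<Rightarrow> 'a set \<Rightarrow> 'a set \<Rightarrow> bool" where
  "share_vertex P f1 f2 \<longleftrightarrow> (\<exists>v \<in> vertices_of P. v \<in> f1 \<and> v \<in> f2)"

definition kneser_adj :: "'a::euclidean_space set \<Rightarrow> 'a \<Rightarrow> 'a \<Rightarrow> bool" where
  "kneser_adj P v w \<longleftrightarrow> v \<noteq> w \<and> \<not> (\<exists>f. f facet_of P \<and> v \<in> f \<and> w \<in> f)"

definition chromatic_number :: "'v set \<Rightarrow> ('v \<Rightarrow> 'v \<Rightarrow> bool) \<Rightarrow> nat" where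
  "chromatic_number V E =
     (LEAST k. \<exists>c :: 'v \<Rightarrow> nat. (\<forall>v\<in>V. c v < k) \<and>
                  (\<forall>v\<in>V. \<forall>w\<in>V. E v w \<longrightarrow> c v \<noteq> c w))"

definition open_hemisphere :: "'a::euclidean_space set \<Rightarrow> bool" where
  "open_hemisphere H \<longleftrightarrow> (\<exists>a. a \<noteq> 0 \<and> H = {u \<in> sphere 0 1. inner a u > 0})"

end

theory Submission
  imports Defs "HOL-Homology.Homology"
begin

text \<open>
  (i) \<Longrightarrow> (ii): take for x_f the vector representing the functional B(-, f^perp).
  (ii) \<Longrightarrow> (iii): take u_f = x_f / |x_f|. For the hemisphere with pole a, a vertex v maximising
  \<langle>a, -\<rangle> over P has a in the cone spanned by the normals of the facets through v (Farkas), and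
  pairing this cone with x_g for a facet g through v is positive.
  (iii) \<Longrightarrow> (iv): a proper colouring of KG(P) with d colours gives d open sets U_i covering
  S^(d-1), U_i consisting of the poles of the hemispheres that a vertex of colour i witnesses.
  By Lyusternik--Schnirelmann some U_i contains an antipodal pair, i.e. two vertices of colour i
  with no common facet, a contradiction. Lyusternik--Schnirelmann follows from Borsuk--Ulam,
  which we derive from the fact that odd self-maps of spheres have odd degree: an odd map can be
  deformed through odd maps into one preserving the equator, and for such maps the degree is
  congruent mod 2 to the degree of the restriction to the equator (HOL-Homology), which gives an
  induction on the dimension.
\<close>

section \<open>Odd maps of spheres\<close>

lemma odd_polynomial_approximation:
  fixes F :: "'a::euclidean_space \<Rightarrow> 'b::euclidean_space"
  assumes K: "compact K" "\<And>x. x \<in> K \<Longrightarrow> -x \<in> K"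
    and contF: "continuous_on K F" and F_odd: "\<And>x. x \<in> K \<Longrightarrow> F (-x) = - F x"
    and T: "subspace T" "F ` K \<subseteq> T" and "0 < \<epsilon>"
  obtains q where "polynomial_function q" "\<And>x. q (-x) = - q x" "q ` K \<subseteq> T"
    "\<And>x. x \<in> K \<Longrightarrow> norm (F x - q x) < \<epsilon>"
proof -
  obtain g where g: "polynomial_function g" "g ` K \<subseteq> T" "\<And>x. x \<in> K \<Longrightarrow> norm (F x - g x) < \<epsilon>"
    using Stone_Weierstrass_polynomial_function_subspace[OF K(1) contF \<open>0 < \<epsilon>\<close> T] by blast
  define q where "q x = (1/2) *\<^sub>R (g x - g (-x))" for x
  show thesis
  proof
    have "polynomial_function (g \<circ> uminus)"
      by (intro polynomial_function_compose g(1) polynomial_function_minus polynomial_function_id)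
    then show "polynomial_function q"
      unfolding q_def using g(1) by (intro polynomial_function_cmul polynomial_function_diff) (auto simp: o_def)
    show "q (-x) = - q x" for x
      by (simp add: q_def algebra_simps)
    show "q ` K \<subseteq> T"
      using g(2) K(2) T(1) by (auto simp: q_def intro!: subspace_scale subspace_diff)
    show "norm (F x - q x) < \<epsilon>" if x: "x \<in> K" for x
    proof -
      have "F x - q x = (1/2) *\<^sub>R ((F x - g x) - (F (-x) - g (-x)))"
        using F_odd[OF x] by (simp add: q_def algebra_simps) (simp flip: scaleR_add_left)
      also have "norm \<dots> \<le> (1/2) * (norm (F x - g x) + norm (F (-x) - g (-x)))"
        by (simp add: norm_triangle_ineq4)
      also have "\<dots> < \<epsilon>"
        using g(3)[OF x] g(3)[OF K(2)[OF x]] by simp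
      finally show ?thesis .
    qed
  qed
qed

lemma sphere_point_avoiding_closed_off_hyperplane:
  fixes c\<^sub>0 e :: "'a::euclidean_space"
  assumes T: "subspace T" and K: "closed K"
    and c\<^sub>0: "c\<^sub>0 \<in> sphere 0 1 \<inter> T" "c\<^sub>0 \<notin> K" and e: "e \<in> T" "e \<noteq> 0"
  obtains c where "c \<in> sphere 0 1 \<inter> T" "c \<notin> K" "c \<bullet> e \<noteq> 0"
proof (cases "c\<^sub>0 \<bullet> e = 0")
  case False
  then show thesis using that c\<^sub>0 by blast
next
  case True
  define g where "g t = (c\<^sub>0 + t *\<^sub>R e) /\<^sub>R norm (c\<^sub>0 + t *\<^sub>R e)" for t :: real
  have c\<^sub>0_c\<^sub>0: "c\<^sub>0 \<bullet> c\<^sub>0 = 1"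
    using c\<^sub>0 by (simp add: norm_eq_1)
  have nz: "c\<^sub>0 + t *\<^sub>R e \<noteq> 0" for t
  proof
    assume "c\<^sub>0 + t *\<^sub>R e = 0"
    then have "c\<^sub>0 \<bullet> (c\<^sub>0 + t *\<^sub>R e) = 0" by simp
    then show False using True c\<^sub>0_c\<^sub>0 by (simp add: inner_add_right inner_commute)
  qed
  have "continuous (at_right 0) g"
    unfolding g_def using nz[of 0] by (intro continuous_intros) auto
  moreover have "g 0 = c\<^sub>0"
    using c\<^sub>0 by (simp add: g_def)
  ultimately have "\<forall>\<^sub>F t in at_right 0. g t \<in> - K"
    using K c\<^sub>0(2) unfolding continuous_within by (intro topological_tendstoD) auto
  moreover have "\<forall>\<^sub>F t in at_right (0::real). t > 0"
    by (simp add: eventually_at_right_less)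
  ultimately obtain t where t: "g t \<notin> K" "t > 0"
    using eventually_happens'[OF trivial_limit_at_right_real eventually_conj] by blast
  show thesis
  proof (rule that[of "g t"])
    have "c\<^sub>0 + t *\<^sub>R e \<in> T"
      using c\<^sub>0 e T by (simp add: subspace_add subspace_scale)
    then show "g t \<in> sphere 0 1 \<inter> T"
      using nz[of t] T by (simp add: g_def subspace_scale)
    have "g t \<bullet> e = t * (e \<bullet> e) / norm (c\<^sub>0 + t *\<^sub>R e)"
      using True by (simp add: g_def inner_add_left divide_inverse_commute)
    then show "g t \<bullet> e \<noteq> 0"
      using t(2) nz[of t] e(2) by simp
  qed (use t in auto)
qed

lemma odd_map_push_into_equator:
  fixes q :: "'a::euclidean_space \<Rightarrow> 'a" and c e :: 'a and T :: "'a set"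
  defines "S \<equiv> T \<inter> {z. z \<bullet> e = 0}"
  assumes T: "subspace T" and c: "c \<in> T" "c \<bullet> e \<noteq> 0"
    and contq: "continuous_on (sphere 0 1 \<inter> T) q" and q_im: "q ` (sphere 0 1 \<inter> T) \<subseteq> T - {0}"
    and q_odd: "\<And>x. q (-x) = - q x"
    and q_not_parallel: "\<And>x l. x \<in> sphere 0 1 \<inter> S \<Longrightarrow> q x \<noteq> l *\<^sub>R c"
  obtains r where "continuous_on (sphere 0 1 \<inter> T) r" "r ` (sphere 0 1 \<inter> T) \<subseteq> T - {0}"
    "\<And>x. r (-x) = - r x" "r ` (sphere 0 1 \<inter> S) \<subseteq> S"
    "homotopic_with_canon (\<lambda>x. True) (sphere 0 1 \<inter> T) (T - {0}) q r"
proof -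
  \<comment> \<open>On the equator (where \<phi> = 1) r is q with its e-component removed along c; the
    segment from q x to r x can only meet 0 where q x is parallel to c and \<phi> x = 1.\<close>
  define \<phi> where "\<phi> x = 1 - \<bar>x \<bullet> e\<bar>" for x
  define \<mu> where "\<mu> x = (q x \<bullet> e) / (c \<bullet> e)" for x
  define r where "r x = q x - (\<phi> x * \<mu> x) *\<^sub>R c" for x
  have q_T: "q x \<in> T" "q x \<noteq> 0" if "x \<in> sphere 0 1 \<inter> T" for x
    using q_im that by blast+
  have segment_nonzero: "q x - (t * \<phi> x * \<mu> x) *\<^sub>R c \<noteq> 0"
    if x: "x \<in> sphere 0 1 \<inter> T" and t: "0 \<le> t" "t \<le> 1" for x t
  proof
    define s where "s = t * \<phi> x * \<mu> x"
    assume "q x - (t * \<phi> x * \<mu> x) *\<^sub>R c = 0"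
    then have qs: "q x = s *\<^sub>R c" by (simp add: s_def)
    then have "\<mu> x = s"
      using c(2) by (simp add: \<mu>_def)
    moreover have "s \<noteq> 0"
      using qs q_T(2)[OF x] by auto
    ultimately have "t * \<phi> x = 1"
      by (simp add: s_def)
    then have "\<phi> x = 1"
      using t by (smt (verit, best) \<phi>_def mult_left_le_one_le abs_ge_zero mult_nonneg_nonpos)
    then have "x \<in> sphere 0 1 \<inter> S"
      using x by (simp add: \<phi>_def S_def)
    then show False
      using q_not_parallel qs by blast
  qed
  show thesis
  proof
    show contr: "continuous_on (sphere 0 1 \<inter> T) r"
      unfolding r_def \<phi>_def \<mu>_def using c(2) by (intro continuous_intros contq) auto
    have r_T: "r x \<in> T" if "x \<in> sphere 0 1 \<inter> T" for x
      using q_T(1)[OF that] c T by (simp add: r_def subspace_diff subspace_scale)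
    show "r ` (sphere 0 1 \<inter> T) \<subseteq> T - {0}"
      using r_T segment_nonzero[of _ 1] by (auto simp: r_def)
    show "r (-x) = - r x" for x
      by (simp add: r_def \<phi>_def \<mu>_def q_odd algebra_simps)
    show "r ` (sphere 0 1 \<inter> S) \<subseteq> S"
    proof (rule image_subsetI)
      fix x assume x: "x \<in> sphere 0 1 \<inter> S"
      then have "r x \<bullet> e = 0"
        using c(2) by (simp add: S_def r_def \<phi>_def \<mu>_def inner_diff_left)
      then show "r x \<in> S"
        using r_T x by (simp add: S_def)
    qed
    show "homotopic_with_canon (\<lambda>x. True) (sphere 0 1 \<inter> T) (T - {0}) q r"
    proof (rule homotopic_with_linear[OF contq contr])
      fix x assume x: "x \<in> sphere 0 1 \<inter> T"
      show "closed_segment (q x) (r x) \<subseteq> T - {0}"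
      proof
        fix z assume "z \<in> closed_segment (q x) (r x)"
        then obtain t where t: "0 \<le> t" "t \<le> 1" "z = q x - (t * \<phi> x * \<mu> x) *\<^sub>R c"
          by (auto simp: in_segment r_def algebra_simps)
        have "z \<in> T"
          using t(3) q_T(1)[OF x] c T by (simp add: subspace_diff subspace_scale)
        then show "z \<in> T - {0}"
          using segment_nonzero[OF x t(1,2)] t(3) by simp
      qed
    qed
  qed
qed

lemma odd_sphere_map_homotopic_to_odd_polynomial:
  fixes F :: "'a::euclidean_space \<Rightarrow> 'a" and T :: "'a set"
  assumes T: "subspace T"
    and contF: "continuous_on (sphere 0 1 \<inter> T) F"
    and F_im: "F ` (sphere 0 1 \<inter> T) \<subseteq> sphere 0 1 \<inter> T"
    and F_odd: "\<And>x. x \<in> sphere 0 1 \<inter> T \<Longrightarrow> F (-x) = - F x"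
  obtains q where "polynomial_function q" "\<And>x. q (-x) = - q x" "q ` (sphere 0 1 \<inter> T) \<subseteq> T - {0}"
    "homotopic_with_canon (\<lambda>x. True) (sphere 0 1 \<inter> T) (T - {0}) F q"
proof -
  let ?ST = "sphere (0::'a) 1 \<inter> T"
  have compact_ST: "compact ?ST"
    using T by (simp add: closed_subspace compact_Int_closed)
  have sym: "-x \<in> ?ST" if "x \<in> ?ST" for x
    using that T by (simp add: subspace_neg)
  have F_ST: "F x \<in> ?ST" if "x \<in> ?ST" for x
    using F_im that by blast
  then have F_T: "F ` ?ST \<subseteq> T"
    by blast
  obtain q where q: "polynomial_function q" "\<And>x. q (-x) = - q x" "q ` ?ST \<subseteq> T"
      "\<And>x. x \<in> ?ST \<Longrightarrow> norm (F x - q x) < 1/2"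
    by (rule odd_polynomial_approximation[where \<epsilon>="1/2", OF compact_ST sym contF F_odd T F_T]) simp_all
  have q_T: "q x \<in> T" if "x \<in> ?ST" for x
    using q(3) that by blast
  have no_zero_between: "0 \<notin> closed_segment (F x) (q x)" if x: "x \<in> ?ST" for x
  proof
    assume "0 \<in> closed_segment (F x) (q x)"
    then have "norm (F x) \<le> norm (q x - F x)"
      using segment_bound[of 0 "F x" "q x"] by simp
    then show False
      using q(4)[OF x] F_ST[OF x] by (simp add: norm_minus_commute)
  qed
  show thesis
  proof
    show "polynomial_function q" "\<And>x. q (-x) = - q x"
      using q(1,2) .
    show "q ` ?ST \<subseteq> T - {0}"
      using q_T no_zero_between by fastforce
    show "homotopic_with_canon (\<lambda>x. True) ?ST (T - {0}) F q"
    proof (rule homotopic_with_linear[OF contF continuous_on_polymonial_function[OF q(1)]])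
      fix x assume x: "x \<in> ?ST"
      have "closed_segment (F x) (q x) \<subseteq> T"
        using F_ST[OF x] q_T[OF x] T by (intro closed_segment_subset subspace_imp_convex) auto
      then show "closed_segment (F x) (q x) \<subseteq> T - {0}"
        using no_zero_between[OF x] by blast
    qed
  qed
qed

lemma odd_map_misses_line_off_hyperplane:
  fixes q :: "'a::euclidean_space \<Rightarrow> 'a" and e :: 'a and T :: "'a set"
  defines "S \<equiv> T \<inter> {z. z \<bullet> e = 0}"
  assumes T: "subspace T" and e: "e \<in> T" "e \<noteq> 0"
    and diffq: "q differentiable_on sphere 0 1 \<inter> S"
    and q_im: "q ` (sphere 0 1 \<inter> S) \<subseteq> T - {0}" and q_odd: "\<And>x. q (-x) = - q x"
  obtains c where "c \<in> T" "c \<bullet> e \<noteq> 0" "\<And>x l. x \<in> sphere 0 1 \<inter> S \<Longrightarrow> q x \<noteq> l *\<^sub>R c"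
proof -
  let ?ST = "sphere (0::'a) 1 \<inter> T" and ?SS = "sphere (0::'a) 1 \<inter> S"
  have S: "subspace S" and S_sub: "S \<subseteq> T"
    using T subspace_hyperplane2[of e] by (auto simp: S_def intro: subspace_inter)
  have "e \<notin> S"
    using e(2) by (simp add: S_def)
  then have "span S \<subset> span T"
    using S T S_sub e(1) by (metis psubsetI span_eq_iff)
  then have dim_ST: "dim S < dim T"
    by (rule dim_psubset)
  have q_T: "q x \<in> T" "q x \<noteq> 0" if "x \<in> ?SS" for x
    using q_im that by blast+
  define f where "f x = q x /\<^sub>R norm (q x)" for x
  have "0 \<notin> q ` ?SS"
    using q_im by blast
  then have "(\<lambda>x. norm (q x)) differentiable_on ?SS"
    by (rule differentiable_on_compose[OF diffq differentiable_on_norm])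
  then have diff_f: "f differentiable_on ?SS"
    unfolding f_def using \<open>0 \<notin> q ` ?SS\<close>
    by (intro differentiable_on_scaleR differentiable_on_inverse diffq) auto
  moreover have "f ` ?SS \<subseteq> ?ST"
  proof (rule image_subsetI)
    fix x assume "x \<in> ?SS"
    then show "f x \<in> ?ST"
      using q_T T by (simp add: f_def subspace_scale)
  qed
  \<comment> \<open>a differentiable map from a lower-dimensional sphere is not onto\<close>
  ultimately obtain c\<^sub>0 where "c\<^sub>0 \<in> ?ST" "c\<^sub>0 \<notin> f ` ?SS"
    using spheremap_lemma1[OF S T dim_ST S_sub] by blast
  moreover have "closed (f ` ?SS)"
    using diff_f S
    by (intro compact_imp_closed compact_continuous_image differentiable_imp_continuous_on)
       (simp_all add: closed_subspace compact_Int_closed)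
  ultimately obtain c where c: "c \<in> ?ST" "c \<notin> f ` ?SS" "c \<bullet> e \<noteq> 0"
    using sphere_point_avoiding_closed_off_hyperplane[OF T _ _ _ e] by metis
  have "q x \<noteq> l *\<^sub>R c" if x: "x \<in> ?SS" for x l
  proof
    assume qx: "q x = l *\<^sub>R c"
    then have "l \<noteq> 0"
      using q_T(2)[OF x] by auto
    \<comment> \<open>since f is odd, its image misses the antipode of c as well\<close>
    then have "f x = c \<or> f (-x) = c"
      using qx c(1) by (auto simp: f_def q_odd abs_if)
    moreover have "-x \<in> ?SS"
      using x S by (simp add: subspace_neg)
    ultimately show False
      using c(2) x by blast
  qed
  then show thesis
    using that c(1,3) by blast
qed

lemma odd_sphere_map_homotopic_to_equator_preserving:
  fixes F :: "'a::euclidean_space \<Rightarrow> 'a" and e :: 'a and T :: "'a set"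
  defines "S \<equiv> T \<inter> {z. z \<bullet> e = 0}"
  assumes T: "subspace T" and e: "e \<in> T" "e \<noteq> 0"
    and contF: "continuous_on (sphere 0 1 \<inter> T) F"
    and F_im: "F ` (sphere 0 1 \<inter> T) \<subseteq> sphere 0 1 \<inter> T"
    and F_odd: "\<And>x. x \<in> sphere 0 1 \<inter> T \<Longrightarrow> F (-x) = - F x"
  obtains G where "continuous_on (sphere 0 1 \<inter> T) G"
    "G ` (sphere 0 1 \<inter> T) \<subseteq> sphere 0 1 \<inter> T"
    "\<And>x. G (-x) = - G x" "G ` (sphere 0 1 \<inter> S) \<subseteq> S"
    "homotopic_with_canon (\<lambda>x. True) (sphere 0 1 \<inter> T) (sphere 0 1 \<inter> T) F G"
proof -
  let ?ST = "sphere (0::'a) 1 \<inter> T" and ?SS = "sphere (0::'a) 1 \<inter> S"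
  obtain q where q: "polynomial_function q" "\<And>x. q (-x) = - q x" "q ` ?ST \<subseteq> T - {0}"
    and F_q: "homotopic_with_canon (\<lambda>x. True) ?ST (T - {0}) F q"
    using odd_sphere_map_homotopic_to_odd_polynomial[of T F] T contF F_im F_odd by blast
  have "?SS \<subseteq> ?ST"
    by (auto simp: S_def)
  then obtain c where c: "c \<in> T" "c \<bullet> e \<noteq> 0" "\<And>x l. x \<in> ?SS \<Longrightarrow> q x \<noteq> l *\<^sub>R c"
    using odd_map_misses_line_off_hyperplane[of T e q, folded S_def] T e q
      differentiable_on_polynomial_function[OF q(1)]
    by blast
  obtain r where r: "continuous_on ?ST r" "r ` ?ST \<subseteq> T - {0}" "\<And>x. r (-x) = - r x"
      "r ` ?SS \<subseteq> S" "homotopic_with_canon (\<lambda>x. True) ?ST (T - {0}) q r"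
    using odd_map_push_into_equator[of T c e q, folded S_def] T c q(2,3)
      continuous_on_polymonial_function[OF q(1)]
    by blast
  define \<nu> where "\<nu> z = z /\<^sub>R norm z" for z :: 'a
  have \<nu>_cont: "continuous_on (T - {0}) \<nu>"
    unfolding \<nu>_def by (intro continuous_intros) auto
  have \<nu>_im: "\<nu> \<in> (T - {0}) \<rightarrow> ?ST"
    using T by (simp add: \<nu>_def subspace_scale)
  show thesis
  proof
    show "continuous_on ?ST (\<nu> \<circ> r)"
      using continuous_on_compose[OF r(1) continuous_on_subset[OF \<nu>_cont r(2)]] .
    show "(\<nu> \<circ> r) ` ?ST \<subseteq> ?ST"
      using r(2) \<nu>_im by auto
    show "(\<nu> \<circ> r) (-x) = - (\<nu> \<circ> r) x" for x
      by (simp add: \<nu>_def r(3))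
    show "(\<nu> \<circ> r) ` ?SS \<subseteq> S"
      using r(4) T subspace_hyperplane2[of e] by (auto simp: \<nu>_def S_def subspace_scale)
    have "homotopic_with_canon (\<lambda>x. True) ?ST ?ST (\<nu> \<circ> F) (\<nu> \<circ> r)"
      using homotopic_with_trans[OF F_q r(5)] \<nu>_cont \<nu>_im by (rule homotopic_with_compose_continuous_left)
    moreover have "F x = (\<nu> \<circ> F) x" if "x \<in> ?ST" for x
      using F_im that by (force simp: \<nu>_def)
    ultimately show "homotopic_with_canon (\<lambda>x. True) ?ST ?ST F (\<nu> \<circ> r)"
      by (rule homotopic_with_eq) auto
  qed
qed

lemma odd_degree_odd_map_nsphere0:
  assumes cf: "continuous_map (nsphere 0) (nsphere 0) f"
    and f_odd: "\<And>u. u \<in> topspace (nsphere 0) \<Longrightarrow> f (\<lambda>i. - u i) = (\<lambda>i. - f u i)"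
  shows "odd (Brouwer_degree2 0 f)"
proof -
  define e where "e = (\<lambda>i::nat. if i = 0 then 1 else (0::real))"
  have nsphere0: "u = e \<or> u = (\<lambda>i. - e i)" if "u \<in> topspace (nsphere 0)" for u
  proof -
    have "(u 0)\<^sup>2 = 1" "\<And>i. i > 0 \<Longrightarrow> u i = 0"
      using that by (auto simp: nsphere)
    then show ?thesis
      by (auto simp: e_def fun_eq_iff power2_eq_1_iff)
  qed
  have e: "e \<in> topspace (nsphere 0)"
    unfolding e_def by (rule in_topspace_nsphere)
  then have f_e: "f e \<in> topspace (nsphere 0)" "f (\<lambda>i. - e i) = (\<lambda>i. - f e i)"
    using continuous_map_image_subset_topspace[OF cf] f_odd by blast+
  from nsphere0[OF f_e(1)] show ?thesis
  proof
    assume "f e = e"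
    then have "Brouwer_degree2 0 f = Brouwer_degree2 0 id"
      using nsphere0 f_e(2) by (intro Brouwer_degree2_eq) auto
    then show ?thesis by simp
  next
    assume f_e': "f e = (\<lambda>i. - e i)"
    have "f u = (\<lambda>i. if i = 0 then - u i else u i)" if "u \<in> topspace (nsphere 0)" for u
      using nsphere0[OF that]
    proof
      assume "u = e"
      then show ?thesis using f_e' by (auto simp: e_def)
    next
      assume "u = (\<lambda>i. - e i)"
      then show ?thesis using f_e' f_e(2) by (auto simp: e_def)
    qed
    then have "Brouwer_degree2 0 f = Brouwer_degree2 0 (\<lambda>x i. if i = 0 then - x i else x i)"
      by (rule Brouwer_degree2_eq)
    then show ?thesis
      by (simp add: Brouwer_degree2_reflection)
  qed
qed

lemma topspace_nsphere_Suc_equator: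
  "topspace (nsphere k) = topspace (nsphere (Suc k)) \<inter> {x. x (Suc k) = 0}"
  by (metis subtopology_nsphere_equator topspace_subtopology)

text \<open>An enumeration b of Basis identifies nsphere k, the unit sphere in the first k + 1
  coordinates of nat \<Rightarrow> real, with the unit sphere of coord_subspace k = span {b 0, ..., b k}.\<close>

locale enumerated_basis =
  fixes b :: "nat \<Rightarrow> 'a::euclidean_space"
  assumes bij_b: "bij_betw b {..<DIM('a)} Basis"
begin

definition coord_subspace :: "nat \<Rightarrow> 'a set" where
  "coord_subspace k = {v. \<forall>i. k < i \<and> i < DIM('a) \<longrightarrow> v \<bullet> b i = 0}"

definition embed :: "nat \<Rightarrow> (nat \<Rightarrow> real) \<Rightarrow> 'a" where
  "embed k x = (\<Sum>i\<le>k. x i *\<^sub>R b i)"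

definition coords :: "nat \<Rightarrow> 'a \<Rightarrow> nat \<Rightarrow> real" where
  "coords k v = (\<lambda>i. if i \<le> k then v \<bullet> b i else 0)"

lemma b_Basis: "i < DIM('a) \<Longrightarrow> b i \<in> Basis"
  using bij_b by (auto simp: bij_betw_def)

lemma inner_b_b: "i < DIM('a) \<Longrightarrow> j < DIM('a) \<Longrightarrow> b i \<bullet> b j = (if i = j then 1 else 0)"
  using bij_b b_Basis[of i] b_Basis[of j] by (auto simp: bij_betw_def inj_on_def inner_Basis)

lemma inner_sum_b:
  assumes "I \<subseteq> {..<DIM('a)}" "j < DIM('a)"
  shows "(\<Sum>i\<in>I. c i *\<^sub>R b i) \<bullet> b j = (if j \<in> I then c j else 0)"
proof -
  have "(\<Sum>i\<in>I. c i *\<^sub>R b i) \<bullet> b j = (\<Sum>i\<in>I. c i * (b i \<bullet> b j))"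
    by (simp add: inner_sum_left)
  also have "\<dots> = (\<Sum>i\<in>I. if i = j then c i else 0)"
    using assms by (intro sum.cong) (auto simp: inner_b_b)
  also have "\<dots> = (if j \<in> I then c j else 0)"
    using finite_subset[OF assms(1)] by simp
  finally show ?thesis .
qed

lemma inner_embed:
  "k < DIM('a) \<Longrightarrow> j < DIM('a) \<Longrightarrow> embed k x \<bullet> b j = (if j \<le> k then x j else 0)"
  unfolding embed_def by (subst inner_sum_b) auto

lemma norm_embed:
  assumes "k < DIM('a)"
  shows "(norm (embed k x))\<^sup>2 = (\<Sum>i\<le>k. (x i)\<^sup>2)"
proof -
  have "(norm (embed k x))\<^sup>2 = (\<Sum>j\<le>k. x j * (embed k x \<bullet> b j))"
    by (simp add: power2_norm_eq_inner embed_def inner_sum_left inner_commute)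
  also have "\<dots> = (\<Sum>j\<le>k. (x j)\<^sup>2)"
    using assms by (intro sum.cong) (auto simp: inner_embed power2_eq_square)
  finally show ?thesis .
qed

lemma subspace_coord_subspace: "subspace (coord_subspace k)"
  unfolding subspace_def coord_subspace_def by (auto simp: inner_add_left)

lemma sum_coords_coord_subspace:
  assumes "v \<in> coord_subspace k" "k < DIM('a)"
  shows "(\<Sum>i\<le>k. (v \<bullet> b i) *\<^sub>R b i) = v"
proof -
  have "(\<Sum>i\<le>k. (v \<bullet> b i) *\<^sub>R b i) = (\<Sum>i<DIM('a). (v \<bullet> b i) *\<^sub>R b i)"
    using assms by (intro sum.mono_neutral_left) (auto simp: coord_subspace_def)
  also have "\<dots> = (\<Sum>u\<in>Basis. (v \<bullet> u) *\<^sub>R u)"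
    using sum.reindex_bij_betw[OF bij_b, of "\<lambda>u. (v \<bullet> u) *\<^sub>R u"] by simp
  finally show ?thesis
    by (simp add: euclidean_representation)
qed

lemma coord_subspace_Suc:
  "Suc k < DIM('a) \<Longrightarrow> coord_subspace k = coord_subspace (Suc k) \<inter> {z. z \<bullet> b (Suc k) = 0}"
  by (auto simp: coord_subspace_def) (metis Suc_lessI)

lemma embed_coord_subspace: "k < DIM('a) \<Longrightarrow> embed k x \<in> coord_subspace k"
  by (simp add: coord_subspace_def inner_embed)

lemma coords_embed:
  assumes "x \<in> topspace (nsphere k)" "k < DIM('a)"
  shows "coords k (embed k x) = x"
  using assms by (auto simp: coords_def inner_embed nsphere)

lemma embed_coords: "v \<in> coord_subspace k \<Longrightarrow> k < DIM('a) \<Longrightarrow> embed k (coords k v) = v"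
  by (simp add: embed_def coords_def sum_coords_coord_subspace)

lemma embed_nsphere:
  assumes "x \<in> topspace (nsphere k)" "k < DIM('a)"
  shows "embed k x \<in> sphere 0 1 \<inter> coord_subspace k"
proof -
  have "(norm (embed k x))\<^sup>2 = 1"
    using assms by (simp add: norm_embed nsphere)
  then show ?thesis
    using embed_coord_subspace[OF assms(2)] norm_ge_zero[of "embed k x"]
    by (auto simp: power2_eq_1_iff)
qed

lemma coords_sphere:
  assumes "v \<in> sphere 0 1 \<inter> coord_subspace k" "k < DIM('a)"
  shows "coords k v \<in> topspace (nsphere k)"
proof -
  have "(\<Sum>i\<le>k. (coords k v i)\<^sup>2) = (norm (embed k (coords k v)))\<^sup>2"
    using assms(2) by (simp add: norm_embed)
  also have "\<dots> = 1"
    using assms embed_coords by auto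
  finally show ?thesis
    by (simp add: nsphere coords_def)
qed

lemma embed_neg: "embed k (\<lambda>i. - x i) = - embed k x"
  by (simp add: embed_def sum_negf)

lemma coords_neg: "coords k (- v) = (\<lambda>i. - coords k v i)"
  by (auto simp: coords_def)

lemma continuous_map_embed:
  assumes "k < DIM('a)"
  shows "continuous_map (nsphere k) (top_of_set (sphere 0 1 \<inter> coord_subspace k)) (embed k)"
proof -
  have "continuous_map (nsphere k) euclidean (\<lambda>x. x i *\<^sub>R b i)" for i
    using continuous_map_compose[OF continuous_map_nsphere_projection[of k i],
        of euclidean "\<lambda>t. t *\<^sub>R b i"]
    by (simp add: o_def continuous_on_scaleR)
  then have "continuous_map (nsphere k) euclidean (embed k)"
    unfolding embed_def by (intro continuous_map_sum) auto
  then show ?thesis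
    using embed_nsphere[OF _ assms] by (simp add: continuous_map_in_subtopology)
qed

lemma continuous_map_coords:
  assumes "k < DIM('a)"
  shows "continuous_map (top_of_set (sphere 0 1 \<inter> coord_subspace k)) (nsphere k) (coords k)"
proof -
  have "continuous_map (top_of_set (sphere 0 1 \<inter> coord_subspace k)) (powertop_real UNIV) (coords k)"
    unfolding continuous_map_componentwise_UNIV coords_def by (simp add: continuous_on_inner)
  then show ?thesis
    using coords_sphere[OF _ assms] unfolding nsphere
    by (auto simp: continuous_map_in_subtopology)
qed

lemma odd_nsphere_map_homotopic_to_equator_preserving:
  assumes k: "Suc k < DIM('a)"
    and cf: "continuous_map (nsphere (Suc k)) (nsphere (Suc k)) f"
    and f_odd: "\<And>u. u \<in> topspace (nsphere (Suc k)) \<Longrightarrow> f (\<lambda>i. - u i) = (\<lambda>i. - f u i)"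
  obtains g where "homotopic_with (\<lambda>x. True) (nsphere (Suc k)) (nsphere (Suc k)) f g"
    "\<And>u. u \<in> topspace (nsphere (Suc k)) \<Longrightarrow> g (\<lambda>i. - u i) = (\<lambda>i. - g u i)"
    "g \<in> topspace (nsphere k) \<rightarrow> topspace (nsphere k)"
proof -
  let ?K = "Suc k"
  let ?T = "coord_subspace ?K" and ?S = "coord_subspace k"
  define F where "F = embed ?K \<circ> f \<circ> coords ?K"
  have "continuous_map (top_of_set (sphere 0 1 \<inter> ?T)) (top_of_set (sphere 0 1 \<inter> ?T)) F"
    unfolding F_def using continuous_map_compose[OF continuous_map_compose[OF
        continuous_map_coords[OF k] cf] continuous_map_embed[OF k]]
    by (simp add: o_assoc)
  then have contF: "continuous_on (sphere 0 1 \<inter> ?T) F"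
    and F_im: "F ` (sphere 0 1 \<inter> ?T) \<subseteq> sphere 0 1 \<inter> ?T"
    by (auto simp: continuous_map_in_subtopology)
  have F_odd: "F (-x) = - F x" if "x \<in> sphere 0 1 \<inter> ?T" for x
    using f_odd[OF coords_sphere[OF that k]] by (simp add: F_def coords_neg embed_neg)
  have e: "b ?K \<in> ?T" "b ?K \<noteq> 0"
    using k b_Basis[OF k] by (auto simp: coord_subspace_def inner_b_b)
  obtain G where contG: "continuous_on (sphere 0 1 \<inter> ?T) G"
    and G_im: "G ` (sphere 0 1 \<inter> ?T) \<subseteq> sphere 0 1 \<inter> ?T"
    and G_odd: "\<And>x. G (-x) = - G x" and G_equator: "G ` (sphere 0 1 \<inter> ?S) \<subseteq> ?S"
    and FG: "homotopic_with_canon (\<lambda>x. True) (sphere 0 1 \<inter> ?T) (sphere 0 1 \<inter> ?T) F G"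
    using odd_sphere_map_homotopic_to_equator_preserving[of ?T "b ?K" F, folded coord_subspace_Suc[OF k]]
      subspace_coord_subspace e contF F_im F_odd
    by blast
  define g where "g = coords ?K \<circ> G \<circ> embed ?K"
  show thesis
  proof
    have "homotopic_with (\<lambda>x. True) (top_of_set (sphere 0 1 \<inter> ?T)) (nsphere ?K)
            (coords ?K \<circ> F) (coords ?K \<circ> G)"
      by (rule homotopic_with_compose_continuous_map_left[OF FG continuous_map_coords[OF k]]) simp
    then have "homotopic_with (\<lambda>x. True) (nsphere ?K) (nsphere ?K) (coords ?K \<circ> F \<circ> embed ?K) g"
      unfolding g_def by (rule homotopic_with_compose_continuous_map_right[OF _ continuous_map_embed[OF k]]) simp
    then show "homotopic_with (\<lambda>x. True) (nsphere ?K) (nsphere ?K) f g"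
    proof (rule homotopic_with_eq)
      fix u assume u: "u \<in> topspace (nsphere ?K)"
      then have "f u \<in> topspace (nsphere ?K)"
        using continuous_map_image_subset_topspace[OF cf] by blast
      then show "f u = (coords ?K \<circ> F \<circ> embed ?K) u"
        using coords_embed[OF u k] by (simp add: F_def coords_embed k)
    qed auto
    show "g (\<lambda>i. - u i) = (\<lambda>i. - g u i)" for u
      by (simp add: g_def embed_neg coords_neg G_odd)
    show "g \<in> topspace (nsphere k) \<rightarrow> topspace (nsphere k)"
    proof
      fix u assume "u \<in> topspace (nsphere k)"
      then have u: "u \<in> topspace (nsphere ?K)" "u ?K = 0"
        unfolding topspace_nsphere_Suc_equator[of k] by auto
      then have "embed ?K u \<in> sphere 0 1 \<inter> ?S"
        using embed_nsphere[OF _ k] k by (auto simp: coord_subspace_def inner_embed le_Suc_eq)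
      then have v: "G (embed ?K u) \<in> sphere 0 1 \<inter> ?T" "G (embed ?K u) \<in> ?S"
        using G_im G_equator coord_subspace_Suc[OF k] by blast+
      have "g u \<in> topspace (nsphere ?K)"
        using coords_sphere[OF v(1) k] by (simp add: g_def)
      moreover have "g u ?K = 0"
        using v(2) k by (simp add: g_def coords_def coord_subspace_def)
      ultimately show "g u \<in> topspace (nsphere k)"
        unfolding topspace_nsphere_Suc_equator[of k] by blast
    qed
  qed
qed

lemma odd_degree_odd_map:
  assumes "k < DIM('a)" and "continuous_map (nsphere k) (nsphere k) f"
    and "\<And>u. u \<in> topspace (nsphere k) \<Longrightarrow> f (\<lambda>i. - u i) = (\<lambda>i. - f u i)"
  shows "odd (Brouwer_degree2 k f)"
  using assms
proof (induction k arbitrary: f)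
  case 0
  then show ?case by (intro odd_degree_odd_map_nsphere0)
next
  case (Suc k)
  obtain g where fg: "homotopic_with (\<lambda>x. True) (nsphere (Suc k)) (nsphere (Suc k)) f g"
    and g_odd: "\<And>u. u \<in> topspace (nsphere (Suc k)) \<Longrightarrow> g (\<lambda>i. - u i) = (\<lambda>i. - g u i)"
    and g_equator: "g \<in> topspace (nsphere k) \<rightarrow> topspace (nsphere k)"
    using odd_nsphere_map_homotopic_to_equator_preserving[of k f] Suc.prems by blast
  have cg: "continuous_map (nsphere (Suc k)) (nsphere (Suc k)) g"
    using homotopic_with_imp_continuous_maps[OF fg] by blast
  have "even (Brouwer_degree2 (Suc k) g - Brouwer_degree2 k g)"
    using Borsuk_odd_mapping_degree_step[OF cg] g_odd g_equator by simp
  moreover have "continuous_map (nsphere k) (nsphere k) g"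
  proof -
    have "continuous_map (nsphere k) (nsphere (Suc k)) g"
      using continuous_map_from_subtopology[OF cg, of "{x. x (Suc k) = 0}"]
      by (simp add: subtopology_nsphere_equator)
    then have "continuous_map (nsphere k) (subtopology (nsphere (Suc k)) {x. x (Suc k) = 0}) g"
      using g_equator unfolding continuous_map_in_subtopology topspace_nsphere_Suc_equator[of k]
      by blast
    then show ?thesis
      by (simp add: subtopology_nsphere_equator)
  qed
  then have "odd (Brouwer_degree2 k g)"
    using Suc.IH Suc.prems(1) g_odd unfolding topspace_nsphere_Suc_equator[of k] by auto
  moreover have "Brouwer_degree2 (Suc k) f = Brouwer_degree2 (Suc k) g"
    using fg by (rule Brouwer_degree2_homotopic)
  ultimately show ?case
    by simp
qed

lemma odd_nsphere_map_surjective: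
  assumes "k < DIM('a)" and cf: "continuous_map (nsphere k) (nsphere k) f"
    and "\<And>u. u \<in> topspace (nsphere k) \<Longrightarrow> f (\<lambda>i. - u i) = (\<lambda>i. - f u i)"
  shows "f ` topspace (nsphere k) = topspace (nsphere k)"
  using odd_degree_odd_map[of k f] Brouwer_degree2_nonsurjective[OF cf] assms by fastforce

lemma Borsuk_Ulam_odd_map_has_zero:
  fixes h :: "'a \<Rightarrow> 'a"
  assumes contf: "continuous_on (sphere 0 1) h"
    and h_odd: "\<And>x. x \<in> sphere 0 1 \<Longrightarrow> h (-x) = - h x"
    and h_hyperplane: "\<And>x. x \<in> sphere 0 1 \<Longrightarrow> h x \<bullet> b (DIM('a) - 1) = 0"
  shows "\<exists>x \<in> sphere 0 1. h x = 0"
proof (rule ccontr)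
  assume "\<not> (\<exists>x \<in> sphere 0 1. h x = 0)"
  then have h_nz: "h x \<noteq> 0" if "x \<in> sphere 0 1" for x
    using that by blast
  define n where "n = DIM('a) - 1"
  have n: "n < DIM('a)"
    by (simp add: n_def)
  have full: "coord_subspace n = UNIV"
    by (auto simp: coord_subspace_def n_def)
  define G where "G x = h x /\<^sub>R norm (h x)" for x
  define g where "g = coords n \<circ> G \<circ> embed n"
  have "continuous_on (sphere 0 1) G"
    unfolding G_def using h_nz by (intro continuous_intros contf) auto
  moreover have "G ` sphere 0 1 \<subseteq> sphere 0 1"
    using h_nz by (auto simp: G_def)
  ultimately have "continuous_map (top_of_set (sphere 0 1 \<inter> coord_subspace n))
          (top_of_set (sphere 0 1 \<inter> coord_subspace n)) G"
    unfolding full by (simp add: continuous_map_in_subtopology image_subset_iff_funcset)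
  then have "continuous_map (nsphere n) (nsphere n) g"
    unfolding g_def using continuous_map_compose[OF continuous_map_compose[OF
        continuous_map_embed[OF n]] continuous_map_coords[OF n]] by (simp add: o_assoc)
  moreover have "g (\<lambda>i. - u i) = (\<lambda>i. - g u i)" if "u \<in> topspace (nsphere n)" for u
    using embed_nsphere[OF that n] by (simp add: g_def embed_neg G_def h_odd coords_neg)
  ultimately have g_onto: "g ` topspace (nsphere n) = topspace (nsphere n)"
    by (rule odd_nsphere_map_surjective[OF n])
  define e where "e = (\<lambda>i::nat. if i = n then 1 else (0::real))"
  have "e \<in> topspace (nsphere n)"
    by (simp add: nsphere e_def if_distrib[of "\<lambda>x. x ^ 2"] cong: if_cong)
  then obtain u where u: "u \<in> topspace (nsphere n)" "g u = e"
    using g_onto by (metis imageE)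
  have "embed n u \<in> sphere 0 1"
    using embed_nsphere[OF u(1) n] by blast
  then have "g u n = 0"
    using h_hyperplane by (simp add: g_def coords_def G_def n_def)
  then show False
    using u(2) by (simp add: e_def)
qed

end

lemma infdist_Compl_pos_iff:
  fixes U :: "'a::metric_space set"
  assumes "open U" "U \<noteq> UNIV"
  shows "infdist x (- U) > 0 \<longleftrightarrow> x \<in> U"
proof
  show "x \<in> U" if "infdist x (- U) > 0"
    using that infdist_zero[of x "- U"] by (metis ComplI less_irrefl)
  show "infdist x (- U) > 0" if "x \<in> U"
    using assms that by (intro infdist_pos_not_in_closed) auto
qed

lemma Lyusternik_Schnirelmann:
  fixes U :: "nat \<Rightarrow> 'a::euclidean_space set"
  assumes U_open: "\<And>i. i < DIM('a) \<Longrightarrow> open (U i)"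
    and U_cover: "sphere 0 1 \<subseteq> (\<Union>i<DIM('a). U i)"
  shows "\<exists>i<DIM('a). \<exists>x \<in> sphere 0 1. x \<in> U i \<and> -x \<in> U i"
proof (rule ccontr)
  assume "\<not> ?thesis"
  then have antipodal_free: "-x \<notin> U i" if "i < DIM('a)" "x \<in> sphere 0 1" "x \<in> U i" for i x
    using that by blast
  obtain b :: "nat \<Rightarrow> 'a" where "bij_betw b {..<DIM('a)} Basis"
    using ex_bij_betw_nat_finite[OF finite_Basis] by (auto simp: atLeast0LessThan)
  then interpret enumerated_basis b
    by unfold_locales
  define n where "n = DIM('a) - 1"
  define \<rho> where "\<rho> i x = infdist x (- U i)" for i x
  have \<rho>_pos: "\<rho> i x > 0 \<longleftrightarrow> x \<in> U i" if i: "i < DIM('a)" for i x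
  proof -
    obtain u :: 'a where "u \<in> sphere 0 1"
      using b_Basis[of 0] by (metis DIM_positive norm_Basis mem_sphere_0)
    then have "U i \<noteq> UNIV"
      using antipodal_free[OF i] by blast
    then show ?thesis
      unfolding \<rho>_def using U_open[OF i] by (rule infdist_Compl_pos_iff[rotated])
  qed
  \<comment> \<open>h is odd with values in a hyperplane, so it has a zero x; then x and -x lie in the
    same sets U_i for i < n, hence in none of them, and both lie in U_n.\<close>
  define h where "h x = (\<Sum>i<n. (\<rho> i x - \<rho> i (-x)) *\<^sub>R b i)" for x
  have h_coord: "h x \<bullet> b j = (if j < n then \<rho> j x - \<rho> j (-x) else 0)" if "j < DIM('a)" for x j
    unfolding h_def using that by (subst inner_sum_b) (auto simp: n_def)
  have "continuous_on (sphere 0 1) h"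
    unfolding h_def \<rho>_def by (intro continuous_intros)
  moreover have "h (-x) = - h x" for x
    by (simp add: h_def sum_negf[symmetric] algebra_simps)
  moreover have "h x \<bullet> b (DIM('a) - 1) = 0" for x
    using h_coord[of "DIM('a) - 1"] by (simp add: n_def)
  ultimately obtain x where x: "x \<in> sphere 0 1" "h x = 0"
    using Borsuk_Ulam_odd_map_has_zero by blast
  have \<rho>_sym: "\<rho> j x = \<rho> j (-x)" if "j < n" for j
    using h_coord[of j x] x(2) that by (simp add: n_def)
  have outside_lower: "x \<notin> U j \<and> -x \<notin> U j" if j: "j < n" for j
  proof -
    have j': "j < DIM('a)"
      using j by (simp add: n_def)
    have "x \<in> U j \<longleftrightarrow> -x \<in> U j"
      using \<rho>_pos[OF j', of x] \<rho>_pos[OF j', of "-x"] \<rho>_sym[OF j] by simp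
    then show ?thesis
      using antipodal_free[OF j' x(1)] by blast
  qed
  have in_last: "y \<in> U n" if "y \<in> {x, -x}" for y
  proof -
    have "y \<in> sphere 0 1"
      using that x(1) by auto
    then obtain i where i: "i < DIM('a)" "y \<in> U i"
      using U_cover by blast
    then have "\<not> i < n"
      using outside_lower that by blast
    then have "i = n"
      using i(1) by (simp add: n_def)
    then show ?thesis
      using i(2) by simp
  qed
  then show False
    using antipodal_free[of n x] in_last x(1) by (simp add: n_def)
qed

section \<open>Normal cones of polytopes\<close>

lemma finite_vertices_of: "polytope P \<Longrightarrow> finite (vertices_of P)"
  unfolding vertices_of_def by (simp add: finite_polyhedron_extreme_points polytope_imp_polyhedron)

lemma polytope_vertex_maximizes_inner:
  assumes "polytope P" "P \<noteq> {}"
  obtains v where "v \<in> vertices_of P" "\<And>x. x \<in> P \<Longrightarrow> a \<bullet> x \<le> a \<bullet> v"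
proof -
  let ?V = "vertices_of P"
  have P_hull: "P = convex hull ?V"
    using assms(1) Krein_Milman_polytope by (auto simp: vertices_of_def polytope_def)
  then have "?V \<noteq> {}"
    using assms(2) by auto
  moreover have "finite ((\<lambda>w. a \<bullet> w) ` ?V)"
    using finite_vertices_of[OF assms(1)] by blast
  ultimately obtain v where v: "v \<in> ?V" "a \<bullet> v = Max ((\<lambda>w. a \<bullet> w) ` ?V)"
    using Max_in by (metis (no_types, lifting) imageE image_is_empty)
  then have v_max: "a \<bullet> w \<le> a \<bullet> v" if "w \<in> ?V" for w
    using finite_vertices_of[OF assms(1)] that by simp
  have "convex hull ?V \<subseteq> {x. a \<bullet> x \<le> a \<bullet> v}"
    using v_max by (intro hull_minimal convex_halfspace_le) auto
  then show thesis
    using that v(1) P_hull by blast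
qed

lemma vertex_in_facet:
  assumes "polytope P" "v \<in> vertices_of P" "P \<noteq> {v}"
  obtains f where "f facet_of P" "v \<in> f"
proof -
  have "{v} face_of P"
    using assms(2) by (simp add: vertices_of_def face_of_singleton)
  then obtain f where "f facet_of P" "{v} \<subseteq> f"
    using face_of_polyhedron_subset_facet[OF polytope_imp_polyhedron[OF assms(1)]] assms(3) by blast
  then show thesis
    using that by blast
qed

lemma facet_has_vertex:
  assumes "polytope P" "f facet_of P"
  obtains v where "v \<in> vertices_of P" "v \<in> f"
proof -
  have f: "f face_of P" "f \<noteq> {}"
    using assms(2) by (auto simp: facet_of_def)
  then obtain v where "v extreme_point_of f"
    using face_of_polytope_polytope[OF assms(1)]
    by (metis extreme_point_exists_convex polytope_imp_compact polytope_imp_convex)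
  then show thesis
    using that extreme_point_of_face[OF f(1)] by (auto simp: vertices_of_def)
qed

lemma equal_hyperplanes_proportional:
  fixes n a :: "'a::euclidean_space"
  assumes eq: "{x. n \<bullet> x = \<beta>} = {x. a \<bullet> x = \<gamma>}" and ne: "{x. a \<bullet> x = \<gamma>} \<noteq> {}" and "a \<noteq> 0"
  obtains \<mu> where "n = \<mu> *\<^sub>R a" "\<beta> = \<mu> * \<gamma>"
proof -
  obtain x\<^sub>0 where x\<^sub>0: "a \<bullet> x\<^sub>0 = \<gamma>"
    using ne by blast
  then have n_x\<^sub>0: "n \<bullet> x\<^sub>0 = \<beta>"
    using eq by blast
  have perp: "n \<bullet> y = 0" if "a \<bullet> y = 0" for y
  proof -
    have "a \<bullet> (x\<^sub>0 + y) = \<gamma>"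
      using x\<^sub>0 that by (simp add: inner_add_right)
    then have "n \<bullet> (x\<^sub>0 + y) = \<beta>"
      using eq by blast
    then show ?thesis
      using n_x\<^sub>0 by (simp add: inner_add_right)
  qed
  define \<mu> where "\<mu> = (n \<bullet> a) / (a \<bullet> a)"
  define w where "w = n - \<mu> *\<^sub>R a"
  have "a \<bullet> w = 0"
    using \<open>a \<noteq> 0\<close> by (simp add: w_def \<mu>_def inner_diff_right inner_commute)
  moreover from this have "n \<bullet> w = 0"
    by (rule perp)
  ultimately have "w \<bullet> w = 0"
    by (simp add: w_def inner_diff_left)
  then have "n = \<mu> *\<^sub>R a"
    by (simp add: w_def)
  moreover from this have "\<beta> = \<mu> * \<gamma>"
    using x\<^sub>0 n_x\<^sub>0 by simp
  ultimately show thesis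
    using that by blast
qed

lemma facet_supporting_halfspace_unique:
  fixes P :: "'a::euclidean_space set"
  assumes full: "aff_dim P = int DIM('a)" and f: "f facet_of P"
    and n: "n \<noteq> 0" "P \<subseteq> {x. n \<bullet> x \<le> \<beta>}" "f = P \<inter> {x. n \<bullet> x = \<beta>}"
    and a: "a \<noteq> 0" "P \<subseteq> {x. a \<bullet> x \<le> \<gamma>}" "f = P \<inter> {x. a \<bullet> x = \<gamma>}"
  shows "{x. n \<bullet> x \<le> \<beta>} = {x. a \<bullet> x \<le> \<gamma>}"
proof -
  have f_dim: "aff_dim f = int DIM('a) - 1" and "f \<noteq> {}"
    using f full by (auto simp: facet_of_def)
  have hull_eq: "affine hull f = {x. c \<bullet> x = r}" if "c \<noteq> 0" "f \<subseteq> {x. c \<bullet> x = r}" for c r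
  proof (rule ccontr)
    assume ne: "affine hull f \<noteq> {x. c \<bullet> x = r}"
    have H: "affine hull {x. c \<bullet> x = r} = {x. c \<bullet> x = r}"
      by (rule affine_hull_eq[THEN iffD2, OF affine_hyperplane])
    have "affine hull f \<subseteq> {x. c \<bullet> x = r}"
      using that(2) by (simp add: hull_minimal affine_hyperplane)
    then have "affine hull f \<subset> affine hull {x. c \<bullet> x = r}"
      unfolding H using ne by blast
    then have "aff_dim f < aff_dim {x. c \<bullet> x = r}"
      by (rule aff_dim_psubset)
    then show False
      using f_dim that(1) by simp
  qed
  have "{x. n \<bullet> x = \<beta>} = {x. a \<bullet> x = \<gamma>}"
    using hull_eq[OF n(1), of \<beta>] hull_eq[OF a(1), of \<gamma>] n(3) a(3) by auto
  moreover have "{x. a \<bullet> x = \<gamma>} \<noteq> {}"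
    using \<open>f \<noteq> {}\<close> a(3) by auto
  ultimately obtain \<mu> where \<mu>: "n = \<mu> *\<^sub>R a" "\<beta> = \<mu> * \<gamma>"
    using equal_hyperplanes_proportional a(1) by blast
  have "\<not> P \<subseteq> {x. a \<bullet> x = \<gamma>}"
    using aff_dim_subset[of P "{x. a \<bullet> x = \<gamma>}"] full a(1) by auto
  then obtain p where "p \<in> P" "a \<bullet> p < \<gamma>"
    using a(2) by force
  moreover from this have "\<mu> * (a \<bullet> p) \<le> \<mu> * \<gamma>"
    using n(2) \<mu> by auto
  ultimately have "\<mu> > 0"
    using n(1) \<mu>(1) by (smt (verit) mult_less_cancel_left scale_zero_left)
  then show ?thesis
    using \<mu> by auto
qed

lemma full_dim_polyhedron_eq_Inter_facet_halfspaces: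
  fixes P :: "'a::euclidean_space set"
  assumes "polyhedron P" and full: "aff_dim P = int DIM('a)"
    and facet_normal: "\<And>f. f facet_of P \<Longrightarrow>
          n f \<noteq> 0 \<and> P \<subseteq> {x. n f \<bullet> x \<le> \<beta> f} \<and> f = P \<inter> {x. n f \<bullet> x = \<beta> f}"
  shows "P = (\<Inter>f\<in>{f. f facet_of P}. {x. n f \<bullet> x \<le> \<beta> f})"
proof
  show "P \<subseteq> (\<Inter>f\<in>{f. f facet_of P}. {x. n f \<bullet> x \<le> \<beta> f})"
    using facet_normal by blast
  obtain F where "finite F" and seq: "P = affine hull P \<inter> \<Inter>F"
    and faces: "\<And>h. h \<in> F \<Longrightarrow> \<exists>a b. a \<noteq> 0 \<and> h = {x. a \<bullet> x \<le> b}"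
    and min: "\<And>F'. F' \<subset> F \<Longrightarrow> P \<subset> affine hull P \<inter> \<Inter>F'"
    using assms(1) by (simp add: polyhedron_Int_affine_minimal) meson
  then obtain a b where ab: "\<And>h. h \<in> F \<Longrightarrow> a h \<noteq> 0 \<and> h = {x. a h \<bullet> x \<le> b h}"
    by metis
  have P_eq: "P = \<Inter>F"
    using seq full by (simp add: aff_dim_eq_full)
  have "(\<Inter>f\<in>{f. f facet_of P}. {x. n f \<bullet> x \<le> \<beta> f}) \<subseteq> h" if h: "h \<in> F" for h
  proof -
    define f where "f = P \<inter> {x. a h \<bullet> x = b h}"
    have f: "f facet_of P"
      unfolding f_def using facet_of_polyhedron_explicit[OF \<open>finite F\<close> seq ab min] h by blast
    have "P \<subseteq> {x. a h \<bullet> x \<le> b h}"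
      using P_eq ab[OF h] h by blast
    then have "{x. n f \<bullet> x \<le> \<beta> f} = h"
      using facet_supporting_halfspace_unique[OF full f] facet_normal[OF f] ab[OF h] f_def by metis
    then show ?thesis
      using f by blast
  qed
  then show "(\<Inter>f\<in>{f. f facet_of P}. {x. n f \<bullet> x \<le> \<beta> f}) \<subseteq> P"
    using P_eq by blast
qed

lemma separating_hyperplane_closed_convex_cone:
  fixes C :: "'a::euclidean_space set"
  assumes "convex_cone C" "closed C" "z \<notin> C"
  obtains w where "w \<bullet> z > 0" "\<And>x. x \<in> C \<Longrightarrow> w \<bullet> x \<le> 0"
proof -
  have "convex C"
    using assms(1) by (simp add: convex_cone_def)
  then obtain y c where y: "y \<bullet> z < c" "\<And>x. x \<in> C \<Longrightarrow> c < y \<bullet> x"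
    using separating_hyperplane_closed_point[OF _ assms(2,3)] by blast
  have "c < 0"
    using y(2) assms(1) by (metis convex_cone_iff inner_zero_right)
  have "y \<bullet> x \<ge> 0" if x: "x \<in> C" for x
  proof (rule ccontr)
    assume "\<not> y \<bullet> x \<ge> 0"
    then have "(2 * c / (y \<bullet> x)) *\<^sub>R x \<in> C"
      using \<open>c < 0\<close> assms(1) x by (intro convex_cone_scaleR) (auto simp: divide_nonpos_neg)
    then have "c < 2 * c"
      using y(2) \<open>\<not> y \<bullet> x \<ge> 0\<close> by fastforce
    then show False
      using \<open>c < 0\<close> by simp
  qed
  then show thesis
    using that[of "- y"] y(1) \<open>c < 0\<close> by simp
qed

lemma maximizer_in_cone_of_active_normals:
  fixes n :: "'i \<Rightarrow> 'a::euclidean_space"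
  assumes "finite I" and P: "P = (\<Inter>i\<in>I. {x. n i \<bullet> x \<le> \<beta> i})" and "v \<in> P"
    and v_max: "\<And>x. x \<in> P \<Longrightarrow> a \<bullet> x \<le> a \<bullet> v"
  shows "a \<in> convex_cone hull (n ` {i\<in>I. n i \<bullet> v = \<beta> i})"
proof (rule ccontr)
  let ?A = "{i\<in>I. n i \<bullet> v = \<beta> i}"
  assume "a \<notin> convex_cone hull (n ` ?A)"
  moreover have "closed (convex_cone hull (n ` ?A))"
    using \<open>finite I\<close> by (intro polyhedron_imp_closed polyhedron_convex_cone_hull) auto
  ultimately obtain w where w: "w \<bullet> a > 0" "\<And>x. x \<in> convex_cone hull (n ` ?A) \<Longrightarrow> w \<bullet> x \<le> 0"
    using separating_hyperplane_closed_convex_cone[OF convex_cone_convex_cone_hull] by blast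
  have active: "n i \<bullet> w \<le> 0" if "i \<in> ?A" for i
    using w(2)[OF hull_inc[OF imageI[OF that]]] by (simp add: inner_commute)
  \<comment> \<open>a small step from v in direction w stays in P, as only the active constraints are tight at v\<close>
  define U where "U = (\<Inter>i\<in>I - ?A. {x. n i \<bullet> x < \<beta> i})"
  have "open U"
    unfolding U_def using \<open>finite I\<close> by (intro open_INT) (auto simp: open_halfspace_lt)
  moreover have "v \<in> U"
    using \<open>v \<in> P\<close> P by (fastforce simp: U_def)
  moreover have "continuous (at_right 0) (\<lambda>t::real. v + t *\<^sub>R w)"
    by (intro continuous_intros)
  ultimately have "\<forall>\<^sub>F t in at_right 0. v + t *\<^sub>R w \<in> U"
    unfolding continuous_within by (simp add: topological_tendstoD)
  moreover have "\<forall>\<^sub>F t in at_right (0::real). t > 0"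
    by (simp add: eventually_at_right_less)
  ultimately obtain t where t: "v + t *\<^sub>R w \<in> U" "t > 0"
    using eventually_happens'[OF trivial_limit_at_right_real eventually_conj] by blast
  have "n i \<bullet> (v + t *\<^sub>R w) \<le> \<beta> i" if "i \<in> I" for i
  proof (cases "i \<in> ?A")
    case True
    then show ?thesis
      using active[OF True] t(2) by (simp add: inner_add_right mult_nonneg_nonpos)
  next
    case False
    then have "i \<in> I - ?A"
      using that by blast
    then show ?thesis
      using t(1) by (force simp: U_def)
  qed
  then have "a \<bullet> (v + t *\<^sub>R w) \<le> a \<bullet> v"
    using v_max unfolding P by blast
  moreover have "a \<bullet> (v + t *\<^sub>R w) > a \<bullet> v"
    using w(1) t(2) by (simp add: inner_add_right inner_commute)
  ultimately show False
    by simp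
qed

lemma inner_pos_convex_cone_hull:
  assumes "a \<in> convex_cone hull S" "a \<noteq> 0" "\<And>s. s \<in> S \<Longrightarrow> s \<bullet> x > 0"
  shows "a \<bullet> x > 0"
proof -
  have "convex_cone (insert 0 {z. z \<bullet> x > 0})"
    unfolding convex_cone_iff by (auto simp: inner_add_left)
  then have "convex_cone hull S \<subseteq> insert 0 {z. z \<bullet> x > 0}"
    using assms(3) by (intro hull_minimal) auto
  then show ?thesis
    using assms(1,2) by auto
qed


lemma polytope_vertex_normal_cone:
  fixes P :: "'a::euclidean_space set" and N :: "'a set \<Rightarrow> 'a"
  assumes poly: "polytope P" and full: "aff_dim P = int DIM('a)"
    and N: "\<And>f. f facet_of P \<Longrightarrow> outward_normal P f (N f)"
  obtains v where "v \<in> vertices_of P" "a \<in> convex_cone hull (N ` {f. f facet_of P \<and> v \<in> f})"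
proof -
  have "\<forall>f. \<exists>\<beta>. f facet_of P \<longrightarrow>
          N f \<noteq> 0 \<and> P \<subseteq> {x. N f \<bullet> x \<le> \<beta>} \<and> f = P \<inter> {x. N f \<bullet> x = \<beta>}"
    using N by (auto simp: outward_normal_def)
  then obtain \<beta> where \<beta>: "\<And>f. f facet_of P \<Longrightarrow>
          N f \<noteq> 0 \<and> P \<subseteq> {x. N f \<bullet> x \<le> \<beta> f} \<and> f = P \<inter> {x. N f \<bullet> x = \<beta> f}"
    by metis
  have P_eq: "P = (\<Inter>f\<in>{f. f facet_of P}. {x. N f \<bullet> x \<le> \<beta> f})"
    using full_dim_polyhedron_eq_Inter_facet_halfspaces[OF polytope_imp_polyhedron[OF poly] full] \<beta> .
  have "P \<noteq> {}"
    using full by auto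
  then obtain v where v: "v \<in> vertices_of P" "\<And>x. x \<in> P \<Longrightarrow> a \<bullet> x \<le> a \<bullet> v"
    using polytope_vertex_maximizes_inner[OF poly] by blast
  then have "v \<in> P"
    by (auto simp: vertices_of_def extreme_point_of_def)
  have "a \<in> convex_cone hull (N ` {f \<in> {f. f facet_of P}. N f \<bullet> v = \<beta> f})"
    using finite_polytope_facets[OF poly] by (intro maximizer_in_cone_of_active_normals[OF _ P_eq \<open>v \<in> P\<close> v(2)]) simp
  moreover have "{f \<in> {f. f facet_of P}. N f \<bullet> v = \<beta> f} = {f. f facet_of P \<and> v \<in> f}"
    using \<beta> \<open>v \<in> P\<close> by blast
  ultimately show thesis
    using that v(1) by simp
qed

lemma bilinear_inner_representation:
  fixes B :: "'a::euclidean_space \<Rightarrow> 'a \<Rightarrow> real"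
  assumes "bilinear B"
  shows "B y z = y \<bullet> (\<Sum>u\<in>Basis. B u z *\<^sub>R u)"
proof -
  have lin: "linear (\<lambda>x. B x z)"
    using assms by (simp add: bilinear_def)
  have "B y z = B (\<Sum>u\<in>Basis. (y \<bullet> u) *\<^sub>R u) z"
    by (simp add: euclidean_representation)
  also have "\<dots> = (\<Sum>u\<in>Basis. (y \<bullet> u) * B u z)"
    by (simp add: linear_sum[OF lin] linear_scale[OF lin] o_def)
  also have "\<dots> = y \<bullet> (\<Sum>u\<in>Basis. B u z *\<^sub>R u)"
    by (simp add: inner_sum_right mult.commute)
  finally show ?thesis .
qed

lemma hemisphere_condition_from_positive_pairing:
  fixes P :: "'a::euclidean_space set" and N x :: "'a set \<Rightarrow> 'a"
  assumes poly: "polytope P" and full: "aff_dim P = int DIM('a)"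
    and N: "\<And>f. f facet_of P \<Longrightarrow> outward_normal P f (N f)"
    and x: "\<And>f g. f facet_of P \<Longrightarrow> g facet_of P \<Longrightarrow> share_vertex P f g \<Longrightarrow> N f \<bullet> x g > 0"
    and H: "open_hemisphere H"
  shows "\<exists>v \<in> vertices_of P. \<forall>f. f facet_of P \<and> v \<in> f \<longrightarrow> x f /\<^sub>R norm (x f) \<in> H"
proof -
  obtain a where a: "a \<noteq> 0" "H = {w \<in> sphere 0 1. a \<bullet> w > 0}"
    using H by (auto simp: open_hemisphere_def)
  obtain v where v: "v \<in> vertices_of P" "a \<in> convex_cone hull (N ` {f. f facet_of P \<and> v \<in> f})"
    using polytope_vertex_normal_cone[OF poly full N] by blast
  have "x g /\<^sub>R norm (x g) \<in> H" if g: "g facet_of P" "v \<in> g" for g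
  proof -
    have "a \<bullet> x g > 0"
      using v g by (intro inner_pos_convex_cone_hull[OF v(2) a(1)]) (auto intro!: x simp: share_vertex_def)
    moreover from this have "x g \<noteq> 0"
      by auto
    ultimately show ?thesis
      by (simp add: a(2))
  qed
  then show ?thesis
    using v(1) by blast
qed

lemma chromatic_number_gt:
  assumes "finite V" and irrefl: "\<And>v. v \<in> V \<Longrightarrow> \<not> E v v"
    and no_colouring: "\<And>c. (\<And>v. v \<in> V \<Longrightarrow> c v < k) \<Longrightarrow> \<exists>v\<in>V. \<exists>w\<in>V. E v w \<and> c v = c w"
  shows "k < chromatic_number V E"
proof -
  define colourable where "colourable k \<longleftrightarrow> (\<exists>c :: 'a \<Rightarrow> nat. (\<forall>v\<in>V. c v < k) \<and>
                  (\<forall>v\<in>V. \<forall>w\<in>V. E v w \<longrightarrow> c v \<noteq> c w))" for k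
  obtain c :: "'a \<Rightarrow> nat" and m where "c ` V = {..<m}" "inj_on c V"
    using finite_imp_inj_to_nat_seg[OF \<open>finite V\<close>] by (metis lessThan_def)
  then have "colourable m"
    using irrefl unfolding colourable_def by (metis imageI inj_on_contraD lessThan_iff)
  then have "colourable (chromatic_number V E)"
    unfolding chromatic_number_def colourable_def[symmetric] by (rule LeastI)
  then show ?thesis
    using no_colouring unfolding colourable_def by (meson leI order_less_le_trans)
qed


lemma kneser_chromatic_number_from_hemisphere_condition:
  fixes P :: "'a::euclidean_space set" and u :: "'a set \<Rightarrow> 'a"
  assumes poly: "polytope P" and full: "aff_dim P = int DIM('a)"
    and hem: "\<And>H. open_hemisphere H \<Longrightarrow> \<exists>v \<in> vertices_of P. \<forall>f. f facet_of P \<and> v \<in> f \<longrightarrow> u f \<in> H"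
  shows "DIM('a) + 1 \<le> chromatic_number (vertices_of P) (kneser_adj P)"
proof -
  let ?V = "vertices_of P"
  have "DIM('a) < chromatic_number ?V (kneser_adj P)"
  proof (rule chromatic_number_gt[OF finite_vertices_of[OF poly]])
    show "\<not> kneser_adj P v v" for v
      by (simp add: kneser_adj_def)
    fix c :: "'a \<Rightarrow> nat" assume c: "\<And>v. v \<in> ?V \<Longrightarrow> c v < DIM('a)"
    define U where "U i = (\<Union>v\<in>{v\<in>?V. c v = i}. \<Inter>f\<in>{f. f facet_of P \<and> v \<in> f}. {y. u f \<bullet> y > 0})" for i
    have U_open: "open (U i)" if "i < DIM('a)" for i
      unfolding U_def using finite_polytope_facets[OF poly]
      by (intro open_UN ballI open_INT) (auto simp: open_halfspace_gt)
    have U_cover: "sphere 0 1 \<subseteq> (\<Union>i<DIM('a). U i)"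
    proof
      fix y :: 'a assume "y \<in> sphere 0 1"
      then have "open_hemisphere {w \<in> sphere 0 1. y \<bullet> w > 0}"
        unfolding open_hemisphere_def by (intro exI[of _ y]) auto
      then obtain v where v: "v \<in> ?V" "\<And>f. f facet_of P \<Longrightarrow> v \<in> f \<Longrightarrow> y \<bullet> u f > 0"
        using hem by blast
      then have "y \<in> U (c v)"
        unfolding U_def by (auto simp: inner_commute)
      then show "y \<in> (\<Union>i<DIM('a). U i)"
        using c[OF v(1)] by blast
    qed
    obtain i y where "y \<in> U i" "-y \<in> U i"
      using Lyusternik_Schnirelmann[OF U_open U_cover] by blast
    obtain v where v: "v \<in> ?V" "c v = i" and v_pos: "\<And>f. f facet_of P \<Longrightarrow> v \<in> f \<Longrightarrow> u f \<bullet> y > 0"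
      using \<open>y \<in> U i\<close> unfolding U_def by blast
    obtain w where w: "w \<in> ?V" "c w = i" and w_neg: "\<And>f. f facet_of P \<Longrightarrow> w \<in> f \<Longrightarrow> u f \<bullet> -y > 0"
      using \<open>-y \<in> U i\<close> unfolding U_def by blast
    have no_common_facet: "\<not> (f facet_of P \<and> v \<in> f \<and> w \<in> f)" for f
      using v_pos[of f] w_neg[of f] by auto
    moreover have "v \<noteq> w"
    proof
      assume "v = w"
      moreover have "P \<noteq> {v}"
        using full by auto
      ultimately show False
        using vertex_in_facet[OF poly v(1)] no_common_facet by blast
    qed
    ultimately have "kneser_adj P v w"
      by (auto simp: kneser_adj_def)
    moreover have "c v = c w"
      using v(2) w(2) by simp
    ultimately show "\<exists>v\<in>?V. \<exists>w\<in>?V. kneser_adj P v w \<and> c v = c w"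
      using v(1) w(1) by blast
  qed
  then show ?thesis
    by simp
qed

theorem lemma2p2:
  fixes P :: "'a::euclidean_space set"
    and N :: "'a set \<Rightarrow> 'a"
  assumes "polytope P"
    and "aff_dim P = int DIM('a)"
    and "\<And>f. f facet_of P \<Longrightarrow> outward_normal P f (N f)"
  defines "cond_i \<equiv> (\<exists>B :: 'a \<Rightarrow> 'a \<Rightarrow> real. bilinear B \<and>
              (\<forall>f1 f2. f1 facet_of P \<and> f2 facet_of P \<and> share_vertex P f1 f2
                 \<longrightarrow> B (N f1) (N f2) > 0))"
    and "cond_ii \<equiv> (\<exists>x :: 'a set \<Rightarrow> 'a.
              (\<forall>f1 f2. f1 facet_of P \<and> f2 facet_of P \<and> share_vertex P f1 f2
                 \<longrightarrow> inner (N f1) (x f2) > 0))"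
    and "cond_iii \<equiv> (\<exists>u :: 'a set \<Rightarrow> 'a.
              (\<forall>f. f facet_of P \<longrightarrow> u f \<in> sphere 0 1) \<and>
              (\<forall>H. open_hemisphere H \<longrightarrow>
                 (\<exists>v \<in> vertices_of P. \<forall>f. f facet_of P \<and> v \<in> f \<longrightarrow> u f \<in> H)))"
    and "cond_iv \<equiv> chromatic_number (vertices_of P) (kneser_adj P) \<ge> DIM('a) + 1"
  shows "(cond_i \<longrightarrow> cond_ii) \<and> (cond_ii \<longrightarrow> cond_iii) \<and> (cond_iii \<longrightarrow> cond_iv)"
proof (intro conjI impI)
  assume cond_i
  then obtain B :: "'a \<Rightarrow> 'a \<Rightarrow> real" where B: "bilinear B"
    "\<And>f1 f2. f1 facet_of P \<Longrightarrow> f2 facet_of P \<Longrightarrow> share_vertex P f1 f2 \<Longrightarrow> B (N f1) (N f2) > 0"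
    unfolding cond_i_def by blast
  show cond_ii
    unfolding cond_ii_def
    using B by (intro exI[of _ "\<lambda>f. \<Sum>u\<in>Basis. B u (N f) *\<^sub>R u"])
      (simp add: bilinear_inner_representation[OF B(1), symmetric])
next
  assume cond_ii
  then obtain x where x_pos: "\<And>f g. f facet_of P \<Longrightarrow> g facet_of P \<Longrightarrow> share_vertex P f g \<Longrightarrow> N f \<bullet> x g > 0"
    unfolding cond_ii_def by blast
  have "x f /\<^sub>R norm (x f) \<in> sphere 0 1" if f: "f facet_of P" for f
  proof -
    obtain v where "v \<in> vertices_of P" "v \<in> f"
      using facet_has_vertex[OF assms(1) f] .
    then have "N f \<bullet> x f > 0"
      using x_pos[OF f f] by (auto simp: share_vertex_def)
    then have "x f \<noteq> 0"
      by auto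
    then show ?thesis
      by simp
  qed
  moreover have "\<exists>v \<in> vertices_of P. \<forall>f. f facet_of P \<and> v \<in> f \<longrightarrow> x f /\<^sub>R norm (x f) \<in> H"
    if "open_hemisphere H" for H
    by (rule hemisphere_condition_from_positive_pairing[where x = x, OF assms(1-3) x_pos that])
  ultimately show cond_iii
    unfolding cond_iii_def by (intro exI[of _ "\<lambda>f. x f /\<^sub>R norm (x f)"]) blast
next
  assume cond_iii
  then obtain u :: "'a set \<Rightarrow> 'a" where
    "\<And>H. open_hemisphere H \<Longrightarrow> \<exists>v \<in> vertices_of P. \<forall>f. f facet_of P \<and> v \<in> f \<longrightarrow> u f \<in> H"
    unfolding cond_iii_def by blast
  then show cond_iv
    unfolding cond_iv_def by (rule kneser_chromatic_number_from_hemisphere_condition[OF assms(1,2)])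
qed

end
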